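(* Let $\Diamond_{ij;kl}$ be a hinge (edge $e_{ij}$ with faces $f_{ijk}$, $f_{ijl}$) with radii $p=r_k,q=r_i,r=r_l,s=r_j>0$ and inversive distances $a=I_{ki},b=I_{il},c=I_{lj},d=I_{jk},e=I_{ij}>1$, such that the edge lengths $l_{\alpha\beta}=\sqrt{r_\alpha^2+r_\beta^2+2I_{\alpha\beta}r_\alpha r_\beta}$ satisfy the triangle inequalities on both faces; develop the hinge into $\mathbb{E}^2$. Then $e_{ij}$ is local weighted Delaunay, i.e. $h_{ij,k}+h_{ij,l}\ge0$, if and only if \[\frac{\sqrt{\Delta_{bce}}}{p}+\frac{\sqrt{\Delta_{ade}}}{r}\le\frac{\sqrt{\Delta_{cdf}}}{q}+\frac{\sqrt{\Delta_{abf}}}{s},\] where $\Delta_{xyz}=x^2+y^2+z^2+2xyz-1$ and $f=\frac{ab+cd+ace+bde+\sqrt{\Delta_{ade}}\sqrt{\Delta_{bce}}}{e^2-1}$.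
   Context: For a Euclidean triangle $f_{ijk}$ with circles of radii $r_i,r_j,r_k$ at the vertices, $O_{ijk}$ denotes the center of the unique circle orthogonal to all three circles (equivalently the point with $|O_{ijk}v_\alpha|^2-r_\alpha^2$ equal for $\alpha=i,j,k$). $h_{ij,k}$ is the distance from $O_{ijk}$ to the line of $e_{ij}$, taken positive if $O_{ijk}$ and $v_k$ lie on the same side of $e_{ij}$ and negative otherwise; similarly $h_{ij,l}$ for $f_{ijl}$. *)

theory Defs
  imports "HOL-Analysis.Analysis"
begin

text \<open>The Euclidean plane is modelled as the complex plane.\<close>

definition cross2 :: "complex \<Rightarrow> complex \<Rightarrow> real" where
  "cross2 z w = Im (cnj z * w)"

definition Delta3 :: "real \<Rightarrow> real \<Rightarrow> real \<Rightarrow> real" where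
  "Delta3 x y z = x\<^sup>2 + y\<^sup>2 + z\<^sup>2 + 2*x*y*z - 1"

definition edge_len :: "real \<Rightarrow> real \<Rightarrow> real \<Rightarrow> real" where
  "edge_len r1 r2 I = sqrt (r1\<^sup>2 + r2\<^sup>2 + 2*I*r1*r2)"

text \<open>O is the centre of the circle orthogonal to the three vertex circles:
  equal power with respect to all three circles.\<close>
definition is_orth_center :: "complex \<Rightarrow> complex \<Rightarrow> real \<Rightarrow> complex \<Rightarrow> real \<Rightarrow> complex \<Rightarrow> real \<Rightarrow> bool" where
  "is_orth_center X v1 r1 v2 r2 v3 r3 \<longleftrightarrow>
     (dist X v1)\<^sup>2 - r1\<^sup>2 = (dist X v2)\<^sup>2 - r2\<^sup>2 \<and>
     (dist X v2)\<^sup>2 - r2\<^sup>2 = (dist X v3)\<^sup>2 - r3\<^sup>2"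

definition line_through :: "complex \<Rightarrow> complex \<Rightarrow> complex set" where
  "line_through a b = {a + of_real t * (b - a) | t. True}"

text \<open>Signed distance from O to the line through a,b: positive iff O lies on the
  same side of the line as c (the sign is irrelevant when O lies on the line).\<close>
definition signed_height :: "complex \<Rightarrow> complex \<Rightarrow> complex \<Rightarrow> complex \<Rightarrow> real" where
  "signed_height X a b c =
     (if cross2 (b - a) (X - a) * cross2 (b - a) (c - a) \<ge> 0
      then infdist X (line_through a b) else - infdist X (line_through a b))"

end

theory Submission
  imports Defs
begin

(* Put v_i at the origin and v_j on the positive real axis, with the apex of the face in the
   upper half plane; then h_{ij,k} is the ordinate Y_k of O_ijk. Solving the power equations of
   O_ijk in these coordinates gives, with l = l_ij and g(t) = t / sqrt (t^2 + q^2 s^2 (e^2 - 1)),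
     (e^2 - 1)/p - (a + e d)/q - (d + e a)/s = - (l / q s) sqrt (Delta_ade) g (l Y_k),
   and symmetrically for f_ijl. The closed forms of sqrt (Delta_cdf) and sqrt (Delta_abf) turn
   the difference of the two sides of the inequality into a positive multiple of
   g (l Y_k) + g (l Y_l), which has the sign of Y_k + Y_l because g is odd and strictly
   increasing. *)

lemma sum_div_sqrt_nonneg_iff:
  fixes u v K :: real
  assumes K: "K > 0"
  shows "0 \<le> u / sqrt (u\<^sup>2 + K) + v / sqrt (v\<^sup>2 + K) \<longleftrightarrow> 0 \<le> u + v"
proof -
  define A B where "A = sqrt (u\<^sup>2 + K)" and "B = sqrt (v\<^sup>2 + K)"
  have A: "A\<^sup>2 = u\<^sup>2 + K" "\<bar>u\<bar> < A" and B: "B\<^sup>2 = v\<^sup>2 + K" "\<bar>v\<bar> < B"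
    unfolding A_def B_def using K by (auto simp flip: real_sqrt_abs intro: real_sqrt_less_mono)
  have "\<bar>u * v\<bar> < A * B"
    using A B by (simp add: abs_mult mult_strict_mono')
  define F where "F = (A * B + u * v + K) / (A * B * (A + B))"
  have F: "F > 0"
    unfolding F_def using \<open>\<bar>u * v\<bar> < A * B\<close> A B K by (intro divide_pos_pos) auto
  have "A > 0" "B > 0"
    using A B by linarith+
  then have "u / A + v / B = (u * B + v * A) * (A + B) / (A * B * (A + B))"
    by (simp add: add_divide_distrib)
  also have "(u * B + v * A) * (A + B) = (u + v) * (A * B + u * v + K)"
    using A(1) B(1) by algebra
  finally have "u / A + v / B = (u + v) * F"
    unfolding F_def by simp
  then show ?thesis
    unfolding A_def B_def using F zero_le_mult_iff[of "u + v" F] by auto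
qed

lemma Delta3_commute: "Delta3 x y z = Delta3 y x z"
  unfolding Delta3_def by (simp add: algebra_simps)

lemma Delta3_pos:
  fixes x y z :: real
  assumes "x \<ge> 0" "y \<ge> 0" "z > 1"
  shows "Delta3 x y z > 0"
proof -
  have "z\<^sup>2 > 1" "x * y * z \<ge> 0"
    using assms one_less_power[of z 2] by auto
  then show ?thesis
    unfolding Delta3_def using zero_le_power2[of x] zero_le_power2[of y] by linarith
qed

lemma Delta3_square_identity:
  fixes a b c d e u v :: real
  assumes e: "e\<^sup>2 \<noteq> 1" and u: "u\<^sup>2 = Delta3 a d e" and v: "v\<^sup>2 = Delta3 b c e"
  shows "Delta3 c d ((a * b + c * d + a * c * e + b * d * e + u * v) / (e\<^sup>2 - 1))
    = (((a + e * d) * v + (b + e * c) * u) / (e\<^sup>2 - 1))\<^sup>2"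
proof -
  have "Delta3 c d ((a * b + c * d + a * c * e + b * d * e + u * v) / (e\<^sup>2 - 1)) * (e\<^sup>2 - 1)\<^sup>2
      = ((a + e * d) * v + (b + e * c) * u)\<^sup>2"
    using u v e unfolding Delta3_def by (simp add: field_simps) algebra
  then show ?thesis
    using e by (simp add: field_simps power_divide)
qed

lemma sqrt_Delta3_closed_forms:
  fixes a b c d e :: real
  assumes nonneg: "a \<ge> 0" "b \<ge> 0" "c \<ge> 0" "d \<ge> 0" and e: "e > 1"
  defines "f \<equiv> (a * b + c * d + a * c * e + b * d * e + sqrt (Delta3 a d e) * sqrt (Delta3 b c e)) / (e\<^sup>2 - 1)"
  shows "sqrt (Delta3 c d f) = ((a + e * d) * sqrt (Delta3 b c e) + (b + e * c) * sqrt (Delta3 a d e)) / (e\<^sup>2 - 1)"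
    and "sqrt (Delta3 a b f) = ((d + e * a) * sqrt (Delta3 b c e) + (c + e * b) * sqrt (Delta3 a d e)) / (e\<^sup>2 - 1)"
proof -
  define u v where "u = sqrt (Delta3 a d e)" and "v = sqrt (Delta3 b c e)"
  have E: "e\<^sup>2 - 1 > 0"
    using e one_less_power[of e 2] by simp
  have u: "u \<ge> 0" "u\<^sup>2 = Delta3 a d e" and v: "v \<ge> 0" "v\<^sup>2 = Delta3 b c e"
    unfolding u_def v_def using Delta3_pos nonneg e by (simp_all add: less_imp_le)
  have "f = (d * c + b * a + d * b * e + c * a * e + u * v) / (e\<^sup>2 - 1)"
    unfolding f_def u_def v_def by (simp add: algebra_simps)
  then have "Delta3 a b f = (((d + e * a) * v + (c + e * b) * u) / (e\<^sup>2 - 1))\<^sup>2"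
    using Delta3_square_identity[where a=d and b=c and c=b and d=a] E u v by (simp add: Delta3_commute)
  moreover have "Delta3 c d f = (((a + e * d) * v + (b + e * c) * u) / (e\<^sup>2 - 1))\<^sup>2"
    unfolding f_def u_def[symmetric] v_def[symmetric] using Delta3_square_identity[where a=a] E u v by simp
  ultimately show "sqrt (Delta3 c d f) = ((a + e * d) * v + (b + e * c) * u) / (e\<^sup>2 - 1)"
    and "sqrt (Delta3 a b f) = ((d + e * a) * v + (c + e * b) * u) / (e\<^sup>2 - 1)"
    using nonneg e E u v by (simp_all add: less_imp_le)
qed

lemma edge_len_commute: "edge_len x y I = edge_len y x I"
  unfolding edge_len_def by (simp add: ac_simps)

lemma edge_len_squared:
  fixes x y I :: real
  assumes "x * y \<ge> 0" "I \<ge> -1"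
  shows "(edge_len x y I)\<^sup>2 = x\<^sup>2 + y\<^sup>2 + 2 * I * x * y"
proof -
  have "x\<^sup>2 + y\<^sup>2 + 2 * I * x * y = (x - y)\<^sup>2 + 2 * (I + 1) * (x * y)"
    by algebra
  also have "\<dots> \<ge> 0"
    using assms by simp
  finally show ?thesis
    unfolding edge_len_def by simp
qed

lemma infdist_line_through:
  assumes "a \<noteq> b"
  shows "infdist X (line_through a b) = \<bar>cross2 (b - a) (X - a)\<bar> / cmod (b - a)"
proof -
  define w where "w = b - a"
  define z where "z = cnj w * (X - a)"
  have w: "cmod w > 0"
    using assms unfolding w_def by simp
  have foot: "cmod w * dist X (a + of_real t * w) = cmod (z - of_real (t * (cmod w)\<^sup>2))" for t
  proof -
    have "cnj w * (X - (a + of_real t * w)) = z - of_real t * (cnj w * w)"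
      unfolding z_def by (simp add: algebra_simps)
    also have "cnj w * w = of_real ((cmod w)\<^sup>2)"
      by (simp only: complex_norm_square mult.commute)
    finally have "cnj w * (X - (a + of_real t * w)) = z - of_real (t * (cmod w)\<^sup>2)"
      by simp
    then show ?thesis
      by (metis complex_mod_cnj dist_norm norm_mult)
  qed
  have lower: "\<bar>Im z\<bar> / cmod w \<le> dist X (a + of_real t * w)" for t
    using abs_Im_le_cmod[of "z - of_real (t * (cmod w)\<^sup>2)"] foot[of t] w
    by (simp add: divide_le_eq mult.commute)
  have "z - of_real (Re z) = \<i> * of_real (Im z)"
    by (simp add: complex_eq_iff)
  then have "cmod (z - of_real (Re z)) = \<bar>Im z\<bar>"
    by (simp only: norm_mult norm_ii norm_of_real mult_1)
  moreover define t\<^sub>0 where "t\<^sub>0 = Re z / (cmod w)\<^sup>2"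
  ultimately have "cmod w * dist X (a + of_real t\<^sub>0 * w) = \<bar>Im z\<bar>"
    using foot[of t\<^sub>0] w by simp
  then have attained: "dist X (a + of_real t\<^sub>0 * w) = \<bar>Im z\<bar> / cmod w"
    using w by (simp add: field_simps)
  have line: "line_through a b = range (\<lambda>t. a + of_real t * w)"
    unfolding line_through_def w_def by auto
  have range_nonempty: "range (\<lambda>t. a + of_real t * w) \<noteq> {}"
    by simp
  have "infdist X (line_through a b) = \<bar>Im z\<bar> / cmod w"
  proof (rule antisym)
    show "infdist X (line_through a b) \<le> \<bar>Im z\<bar> / cmod w"
      using infdist_le[of _ "line_through a b" X] attained unfolding line by (metis rangeI)
    show "\<bar>Im z\<bar> / cmod w \<le> infdist X (line_through a b)"
      unfolding line infdist_notempty[OF range_nonempty]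
      by (rule cINF_greatest) (auto simp: lower)
  qed
  then show ?thesis
    unfolding z_def w_def cross2_def .
qed

lemma signed_height_eq:
  assumes "cross2 (b - a) (c - a) \<noteq> 0"
  shows "signed_height X a b c = sgn (cross2 (b - a) (c - a)) * cross2 (b - a) (X - a) / cmod (b - a)"
proof -
  have "a \<noteq> b"
    using assms unfolding cross2_def by auto
  then show ?thesis
    using assms unfolding signed_height_def infdist_line_through[OF \<open>a \<noteq> b\<close>]
    by (auto simp: sgn_if zero_le_mult_iff abs_if divide_simps)
qed

lemma edge_coordinates:
  assumes "cross2 (b - a) (c - a) \<noteq> 0"
  obtains x y :: "complex \<Rightarrow> real"
  where "x a = 0" "y a = 0" "x b = dist a b" "y b = 0" "y c > 0"
    and "\<And>P Q. (dist P Q)\<^sup>2 = (x P - x Q)\<^sup>2 + (y P - y Q)\<^sup>2"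
    and "\<And>P. signed_height P a b c = y P"
proof -
  define w where "w = b - a"
  define \<sigma> where "\<sigma> = sgn (cross2 w (c - a))"
  define x where "x P = Re (cnj w * (P - a)) / cmod w" for P
  define y where "y P = \<sigma> * Im (cnj w * (P - a)) / cmod w" for P
  have w: "cmod w > 0"
    using assms unfolding w_def cross2_def by auto
  have \<sigma>: "\<sigma>\<^sup>2 = 1"
    using assms unfolding \<sigma>_def w_def by (simp add: sgn_if)
  have ww: "cnj w * w = of_real ((cmod w)\<^sup>2)"
    by (simp only: complex_norm_square mult.commute)
  have a: "x a = 0" "y a = 0"
    unfolding x_def y_def by simp_all
  have b: "x b = dist a b" "y b = 0"
    using w unfolding x_def y_def w_def[symmetric] ww
    by (simp_all add: dist_norm power2_eq_square w_def norm_minus_commute)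
  have c: "y c > 0"
    using assms w unfolding y_def \<sigma>_def w_def cross2_def by (simp add: sgn_if)
  have height: "signed_height P a b c = y P" for P
    unfolding signed_height_eq[OF assms] y_def \<sigma>_def w_def cross2_def ..
  have dist: "(dist P Q)\<^sup>2 = (x P - x Q)\<^sup>2 + (y P - y Q)\<^sup>2" for P Q
  proof -
    define u where "u = cnj w * (P - Q)"
    have "x P - x Q = Re u / cmod w" "y P - y Q = \<sigma> * Im u / cmod w"
      unfolding x_def y_def u_def by (simp_all add: diff_divide_distrib[symmetric] algebra_simps)
    then have "(x P - x Q)\<^sup>2 + (y P - y Q)\<^sup>2 = (cmod u)\<^sup>2 / (cmod w)\<^sup>2"
      using \<sigma> by (simp add: cmod_power2 power_divide power_mult_distrib add_divide_distrib)
    also have "\<dots> = (dist P Q)\<^sup>2"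
      using w unfolding u_def by (simp add: norm_mult power_mult_distrib dist_norm)
    finally show ?thesis ..
  qed
  show ?thesis
    by (rule that[of x y, OF a b c dist height])
qed

lemma orth_center_coordinate_identities:
  fixes p q s a d e l x h x0 y0 :: real
  assumes l: "l \<noteq> 0"
    and ij: "l\<^sup>2 = q\<^sup>2 + s\<^sup>2 + 2 * e * q * s"
    and ki: "x\<^sup>2 + h\<^sup>2 = p\<^sup>2 + q\<^sup>2 + 2 * a * p * q"
    and jk: "(x - l)\<^sup>2 + h\<^sup>2 = s\<^sup>2 + p\<^sup>2 + 2 * d * s * p"
    and Oij: "x0\<^sup>2 + y0\<^sup>2 - q\<^sup>2 = (x0 - l)\<^sup>2 + y0\<^sup>2 - s\<^sup>2"
    and Ojk: "(x0 - l)\<^sup>2 + y0\<^sup>2 - s\<^sup>2 = (x0 - x)\<^sup>2 + (y0 - h)\<^sup>2 - p\<^sup>2"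
  shows "Delta3 a d e * (p * q * s)\<^sup>2 = h\<^sup>2 * ((l * y0)\<^sup>2 + (q * s)\<^sup>2 * (e\<^sup>2 - 1))"
    and "(q * s)\<^sup>2 * (e\<^sup>2 - 1) - p * q * s\<^sup>2 * (a + e * d) - p * q\<^sup>2 * s * (d + e * a) = - (l\<^sup>2 * h * y0)"
proof -
  have x0: "l * x0 = q * (q + e * s)"
    using Oij ij by (simp add: algebra_simps power2_eq_square)
  have x: "l * x = q\<^sup>2 + e * q * s + a * p * q - d * p * s"
    using ki jk ij by (simp add: algebra_simps power2_eq_square)
  have "y0 * h = q\<^sup>2 + a * p * q - x0 * x"
    using Oij Ojk ki by (simp add: algebra_simps power2_eq_square)
  then have "l\<^sup>2 * (y0 * h) = l\<^sup>2 * (q\<^sup>2 + a * p * q) - (l * x0) * (l * x)"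
    by algebra
  then have y0h: "l\<^sup>2 * (y0 * h) = l\<^sup>2 * (q\<^sup>2 + a * p * q) - (q * (q + e * s)) * (q\<^sup>2 + e * q * s + a * p * q - d * p * s)"
    unfolding x0 x .
  have h: "l\<^sup>2 * h\<^sup>2 = l\<^sup>2 * (p\<^sup>2 + q\<^sup>2 + 2 * a * p * q) - (q\<^sup>2 + e * q * s + a * p * q - d * p * s)\<^sup>2"
    unfolding ki[symmetric] x[symmetric] by (simp add: algebra_simps power2_eq_square)
  show "(q * s)\<^sup>2 * (e\<^sup>2 - 1) - p * q * s\<^sup>2 * (a + e * d) - p * q\<^sup>2 * s * (d + e * a) = - (l\<^sup>2 * h * y0)"
    using y0h ij by algebra
  have "l\<^sup>2 * (h\<^sup>2 * ((l * y0)\<^sup>2 + (q * s)\<^sup>2 * (e\<^sup>2 - 1)))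
      = (l\<^sup>2 * (y0 * h))\<^sup>2 + (l\<^sup>2 * h\<^sup>2) * (q * s)\<^sup>2 * (e\<^sup>2 - 1)"
    by (simp add: algebra_simps power2_eq_square)
  also have "\<dots> = l\<^sup>2 * (Delta3 a d e * (p * q * s)\<^sup>2)"
    unfolding y0h h unfolding ij Delta3_def by algebra
  finally show "Delta3 a d e * (p * q * s)\<^sup>2 = h\<^sup>2 * ((l * y0)\<^sup>2 + (q * s)\<^sup>2 * (e\<^sup>2 - 1))"
    using l by simp
qed

lemma orth_center_height_identity_coords:
  fixes p q s a d e l x h x0 y0 :: real
  assumes pos: "p > 0" "q > 0" "s > 0" and e: "e > 1" and l: "l > 0" and h: "h > 0"
    and ij: "l\<^sup>2 = q\<^sup>2 + s\<^sup>2 + 2 * e * q * s"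
    and ki: "x\<^sup>2 + h\<^sup>2 = p\<^sup>2 + q\<^sup>2 + 2 * a * p * q"
    and jk: "(x - l)\<^sup>2 + h\<^sup>2 = s\<^sup>2 + p\<^sup>2 + 2 * d * s * p"
    and Oij: "x0\<^sup>2 + y0\<^sup>2 - q\<^sup>2 = (x0 - l)\<^sup>2 + y0\<^sup>2 - s\<^sup>2"
    and Ojk: "(x0 - l)\<^sup>2 + y0\<^sup>2 - s\<^sup>2 = (x0 - x)\<^sup>2 + (y0 - h)\<^sup>2 - p\<^sup>2"
  shows "(e\<^sup>2 - 1) / p - (a + e * d) / q - (d + e * a) / s
    = - l / (q * s) * sqrt (Delta3 a d e) * (l * y0 / sqrt ((l * y0)\<^sup>2 + (q * s)\<^sup>2 * (e\<^sup>2 - 1)))"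
proof -
  have "l \<noteq> 0"
    using l by simp
  note identities = orth_center_coordinate_identities[OF this ij ki jk Oij Ojk]
  define R where "R = sqrt ((l * y0)\<^sup>2 + (q * s)\<^sup>2 * (e\<^sup>2 - 1))"
  have "e\<^sup>2 > 1"
    using e by (simp add: one_less_power)
  then have R: "R > 0"
    unfolding R_def using pos by (intro real_sqrt_gt_zero add_nonneg_pos) auto
  have "sqrt (Delta3 a d e) * (p * q * s) = sqrt (Delta3 a d e * (p * q * s)\<^sup>2)"
    using pos by (simp add: real_sqrt_mult)
  also have "\<dots> = h * R"
    unfolding identities(1) R_def using h by (simp add: real_sqrt_mult)
  finally have V: "sqrt (Delta3 a d e) * (p * q * s) = h * R" .
  have "(e\<^sup>2 - 1) / p - (a + e * d) / q - (d + e * a) / s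
      = ((q * s)\<^sup>2 * (e\<^sup>2 - 1) - p * q * s\<^sup>2 * (a + e * d) - p * q\<^sup>2 * s * (d + e * a)) / (p * q\<^sup>2 * s\<^sup>2)"
    using pos by (simp add: field_simps power2_eq_square)
  also have "\<dots> = - (l\<^sup>2 * h * y0) / (p * q\<^sup>2 * s\<^sup>2)"
    unfolding identities(2) ..
  also have "\<dots> = - l / (q * s) * sqrt (Delta3 a d e) * (l * y0 / R)"
    using V pos R by (simp add: field_simps power2_eq_square)
  finally show ?thesis
    unfolding R_def .
qed

lemma orth_center_height_identity:
  fixes p q s a d e :: real and vi vj vk C :: complex
  assumes pos: "p > 0" "q > 0" "s > 0" and inv: "a \<ge> -1" "d \<ge> -1" "e > 1"
    and len: "dist vi vj = edge_len q s e" "dist vk vi = edge_len p q a" "dist vj vk = edge_len s p d"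
    and face: "cross2 (vj - vi) (vk - vi) \<noteq> 0"
    and C: "is_orth_center C vi q vj s vk p"
  defines "l \<equiv> dist vi vj" and "Y \<equiv> signed_height C vi vj vk"
  shows "(e\<^sup>2 - 1) / p - (a + e * d) / q - (d + e * a) / s
    = - l / (q * s) * sqrt (Delta3 a d e) * (l * Y / sqrt ((l * Y)\<^sup>2 + (q * s)\<^sup>2 * (e\<^sup>2 - 1)))"
proof -
  obtain x y where
    i: "x vi = 0" "y vi = 0" and j: "x vj = l" "y vj = 0" and k: "y vk > 0"
    and dist: "\<And>P Q. (dist P Q)\<^sup>2 = (x P - x Q)\<^sup>2 + (y P - y Q)\<^sup>2"
    and height: "\<And>P. signed_height P vi vj vk = y P"
    using edge_coordinates[OF face] unfolding l_def by metis
  have "vi \<noteq> vj"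
    using face unfolding cross2_def by auto
  then have "l > 0"
    unfolding l_def by simp
  have "l\<^sup>2 = q\<^sup>2 + s\<^sup>2 + 2 * e * q * s"
    unfolding l_def len(1) using pos inv by (simp add: edge_len_squared)
  moreover have "(x vk)\<^sup>2 + (y vk)\<^sup>2 = p\<^sup>2 + q\<^sup>2 + 2 * a * p * q"
    using dist[of vk vi] len(2) pos inv by (simp add: i edge_len_squared)
  moreover have "(x vk - l)\<^sup>2 + (y vk)\<^sup>2 = s\<^sup>2 + p\<^sup>2 + 2 * d * s * p"
    using dist[of vj vk] len(3) pos inv by (simp add: j edge_len_squared power2_commute)
  moreover have "(x C)\<^sup>2 + (y C)\<^sup>2 - q\<^sup>2 = (x C - l)\<^sup>2 + (y C)\<^sup>2 - s\<^sup>2"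
    and "(x C - l)\<^sup>2 + (y C)\<^sup>2 - s\<^sup>2 = (x C - x vk)\<^sup>2 + (y C - y vk)\<^sup>2 - p\<^sup>2"
    using C unfolding is_orth_center_def dist i j by simp_all
  ultimately show ?thesis
    unfolding Y_def height by (rule orth_center_height_identity_coords[OF pos inv(3) \<open>l > 0\<close> k])
qed

lemma hinge_inequality_iff_height_sum:
  fixes p q r s a b c d e l Vk Vl Yk Yl :: real
  assumes pos: "p > 0" "q > 0" "r > 0" "s > 0" and e: "e > 1" and l: "l > 0"
    and V: "Vk > 0" "Vl > 0"
  defines "g \<equiv> \<lambda>t. t / sqrt (t\<^sup>2 + (q * s)\<^sup>2 * (e\<^sup>2 - 1))"
  assumes face_k: "(e\<^sup>2 - 1) / p - (a + e * d) / q - (d + e * a) / s = - l / (q * s) * Vk * g (l * Yk)"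
    and face_l: "(e\<^sup>2 - 1) / r - (b + e * c) / q - (c + e * b) / s = - l / (q * s) * Vl * g (l * Yl)"
  shows "Vl / p + Vk / r \<le> ((a + e * d) * Vl + (b + e * c) * Vk) / (e\<^sup>2 - 1) / q
      + ((d + e * a) * Vl + (c + e * b) * Vk) / (e\<^sup>2 - 1) / s \<longleftrightarrow> 0 \<le> Yk + Yl"
    (is "?lhs \<le> ?rhs \<longleftrightarrow> _")
proof -
  define E where "E = e\<^sup>2 - 1"
  define \<kappa> where "\<kappa> = l / (q * s * E) * Vk * Vl"
  have E: "E > 0"
    unfolding E_def using e one_less_power[of e 2] by simp
  then have "\<kappa> > 0"
    unfolding \<kappa>_def using l pos V by simp
  have "?rhs - ?lhs
      = - (Vl * (E / p - (a + e * d) / q - (d + e * a) / s) + Vk * (E / r - (b + e * c) / q - (c + e * b) / s)) / E"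
    unfolding E_def[symmetric] using E pos by (simp add: field_simps)
  also have "\<dots> = \<kappa> * (g (l * Yk) + g (l * Yl))"
    unfolding E_def face_k face_l unfolding E_def[symmetric] \<kappa>_def using E pos by (simp add: field_simps)
  finally have "?lhs \<le> ?rhs \<longleftrightarrow> 0 \<le> \<kappa> * (g (l * Yk) + g (l * Yl))"
    by linarith
  also have "\<dots> \<longleftrightarrow> 0 \<le> g (l * Yk) + g (l * Yl)"
    using \<open>\<kappa> > 0\<close> by (metis mult_le_cancel_left_pos mult_zero_right)
  also have "\<dots> \<longleftrightarrow> 0 \<le> l * Yk + l * Yl"
    unfolding g_def using pos E unfolding E_def by (intro sum_div_sqrt_nonneg_iff) simp
  also have "\<dots> \<longleftrightarrow> 0 \<le> Yk + Yl"
    using l by (simp add: zero_le_mult_iff flip: distrib_left)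
  finally show ?thesis .
qed

theorem lemma4p5:
  fixes p q r s a b c d e :: real
    and vi vj vk vl Oijk Oijl :: complex
  assumes pos: "p > 0" "q > 0" "r > 0" "s > 0"
    and inv: "a > 1" "b > 1" "c > 1" "d > 1" "e > 1"
    and tri_ijk: "edge_len q s e < edge_len s p d + edge_len p q a"
                 "edge_len s p d < edge_len q s e + edge_len p q a"
                 "edge_len p q a < edge_len q s e + edge_len s p d"
    and tri_ijl: "edge_len q s e < edge_len s r c + edge_len r q b"
                 "edge_len s r c < edge_len q s e + edge_len r q b"
                 "edge_len r q b < edge_len q s e + edge_len s r c"
    and len: "dist vi vj = edge_len q s e" "dist vk vi = edge_len p q a"
             "dist vj vk = edge_len s p d" "dist vi vl = edge_len q r b"
             "dist vl vj = edge_len r s c"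
    and opp: "cross2 (vj - vi) (vk - vi) * cross2 (vj - vi) (vl - vi) < 0"
    and Ok: "is_orth_center Oijk vi q vj s vk p"
    and Ol: "is_orth_center Oijl vi q vj s vl r"
  shows "signed_height Oijk vi vj vk + signed_height Oijl vi vj vl \<ge> 0 \<longleftrightarrow>
    (let f = (a*b + c*d + a*c*e + b*d*e + sqrt (Delta3 a d e) * sqrt (Delta3 b c e)) / (e\<^sup>2 - 1)
     in sqrt (Delta3 b c e) / p + sqrt (Delta3 a d e) / r
        \<le> sqrt (Delta3 c d f) / q + sqrt (Delta3 a b f) / s)"
proof -
  have faces: "cross2 (vj - vi) (vk - vi) \<noteq> 0" "cross2 (vj - vi) (vl - vi) \<noteq> 0"
    using opp by auto
  then have "dist vi vj > 0"
    unfolding cross2_def by auto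
  have V: "sqrt (Delta3 a d e) > 0" "sqrt (Delta3 b c e) > 0"
    using inv by (simp_all add: Delta3_pos)
  have "dist vl vi = edge_len r q b" "dist vj vl = edge_len s r c"
    using len(4,5) by (simp_all add: dist_commute edge_len_commute)
  note face_l = orth_center_height_identity[OF pos(3,2,4) _ _ inv(5) len(1) this faces(2) Ol]
  note face_k = orth_center_height_identity[OF pos(1,2,4) _ _ inv(5) len(1-3) faces(1) Ok]
  have nonneg: "a \<ge> 0" "b \<ge> 0" "c \<ge> 0" "d \<ge> 0"
    using inv by simp_all
  show ?thesis
    unfolding Let_def sqrt_Delta3_closed_forms[OF nonneg inv(5)]
    using hinge_inequality_iff_height_sum[OF pos inv(5) \<open>dist vi vj > 0\<close> V face_k face_l] inv
    by simp
qed

end
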